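(* Let $M$ be a universal semi-POVM and let $x\in\mathbb{C}^N$ be computable with $\|x\|=1$. Then the map $\Sigma^*\ni s\mapsto x^\dagger M(s)x$ is a universal probability.
   Context: $N$ is a fixed positive integer; $\Sigma^*$ is the set of finite binary strings. A vector $x\in\mathbb{C}^N$ is computable if each component is $a+ib$ with $a,b$ computable real numbers. $\mathrm{Her}(N)$ is the set of $N\times N$ Hermitian matrices and $\mathrm{Her}_Q(N)$ those with entries in $\{a+ib:a,b\in\mathbb{Q}\}$; $A\leqslant B$ means $B-A$ is positive semi-definite. A lower-computable semi-measure is a function $r:\Sigma^*\to[0,\infty)$ with $\sum_s r(s)\le 1$ such that there is a total recursive $f:\mathbb{N}\times\Sigma^*\to\mathbb{Q}$ with $\lim_{n}f(n,s)=r(s)$ and $f(n,s)\le f(n+1,s)$ for all $n,s$. A universal probability is a lower-computable semi-measure $m$ such that for every lower-computable semi-measure $r$ there is $c>0$ with $c\,r(s)\le m(s)$ for all $s$. A semi-POVM on $\Sigma^*$ is a map $R:\Sigma^*\to\mathrm{Her}(N)$ with $0\leqslant R(s)$ for all $s$ and $\sum_s R(s)\leqslant I$. A lower-computable semi-POVM is a semi-POVM $R$ for which there is a total recursive $f:\mathbb{N}\times\Sigma^*\to\mathrm{Her}_Q(N)$ with $\lim_{n}f(n,s)=R(s)$ and $f(n,s)\leqslant R(s)$ for all $n,s$. A universal semi-POVM is a lower-computable semi-POVM $M$ such that for every lower-computable semi-POVM $R$ there is $c>0$ with $c\,R(s)\leqslant M(s)$ for all $s\in\Sigma^*$. *)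

theory Defs
  imports "HOL-Analysis.Analysis" "HOL-Library.Nat_Bijection"
begin

datatype recf = Zero | Succ | Proj nat | Comp recf "recf list" | Prim recf recf | Mu recf

inductive eval :: "recf \<Rightarrow> nat list \<Rightarrow> nat \<Rightarrow> bool" where
  eval_Zero: "eval Zero xs 0"
| eval_Succ: "eval Succ (x # xs) (Suc x)"
| eval_Proj: "i < length xs \<Longrightarrow> eval (Proj i) xs (xs ! i)"
| eval_Comp: "list_all2 (\<lambda>g y. eval g xs y) gs ys \<Longrightarrow> eval f ys z \<Longrightarrow> eval (Comp f gs) xs z"
| eval_Prim0: "eval f xs y \<Longrightarrow> eval (Prim f g) (0 # xs) y"
| eval_PrimS: "eval (Prim f g) (n # xs) y \<Longrightarrow> eval g (y # n # xs) z \<Longrightarrow> eval (Prim f g) (Suc n # xs) z"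
| eval_Mu: "eval f (n # xs) 0 \<Longrightarrow> (\<forall>m<n. \<exists>y. 0 < y \<and> eval f (m # xs) y) \<Longrightarrow> eval (Mu f) xs n"

text \<open>Finite binary strings are bool lists; bijective (length-lexicographic) code into nat.\<close>
fun bcode :: "bool list \<Rightarrow> nat" where
  "bcode [] = 0"
| "bcode (b # s) = 2 * bcode s + (if b then 2 else 1)"

definition rcode :: "rat \<Rightarrow> nat" where
  "rcode q = (case quotient_of q of (a, b) \<Rightarrow> prod_encode (int_encode a, int_encode b))"

definition rec_nat_rat :: "(nat \<Rightarrow> rat) \<Rightarrow> bool" where
  "rec_nat_rat q \<longleftrightarrow> (\<exists>r. \<forall>n. eval r [n] (rcode (q n)))"

definition rec_fun :: "(nat \<Rightarrow> bool list \<Rightarrow> rat) \<Rightarrow> bool" where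
  "rec_fun f \<longleftrightarrow> (\<exists>r. \<forall>n s. eval r [prod_encode (n, bcode s)] (rcode (f n s)))"

definition computable_real :: "real \<Rightarrow> bool" where
  "computable_real a \<longleftrightarrow> (\<exists>q. rec_nat_rat q \<and> (\<forall>n. \<bar>a - of_rat (q n)\<bar> \<le> (1/2) ^ n))"

definition computable_vec :: "complex ^ 'n \<Rightarrow> bool" where
  "computable_vec x \<longleftrightarrow> (\<forall>i. computable_real (Re (x $ i)) \<and> computable_real (Im (x $ i)))"

definition qform :: "complex ^ 'n ^ 'n \<Rightarrow> complex ^ 'n \<Rightarrow> complex" where
  "qform A v = (\<Sum>i\<in>UNIV. \<Sum>j\<in>UNIV. cnj (v $ i) * (A $ i $ j) * v $ j)"

definition hermitian :: "complex ^ 'n ^ 'n \<Rightarrow> bool" where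
  "hermitian A \<longleftrightarrow> (\<forall>i j. A $ i $ j = cnj (A $ j $ i))"

definition psd :: "complex ^ 'n ^ 'n \<Rightarrow> bool" where
  "psd A \<longleftrightarrow> hermitian A \<and> (\<forall>v. 0 \<le> Re (qform A v))"

definition loewner_le :: "complex ^ 'n ^ 'n \<Rightarrow> complex ^ 'n ^ 'n \<Rightarrow> bool" where
  "loewner_le A B \<longleftrightarrow> psd (B - A)"

definition semi_measure :: "(bool list \<Rightarrow> real) \<Rightarrow> bool" where
  "semi_measure r \<longleftrightarrow> (\<forall>s. 0 \<le> r s) \<and> (\<forall>F. finite F \<longrightarrow> sum r F \<le> 1)"

definition lower_computable_sm :: "(bool list \<Rightarrow> real) \<Rightarrow> bool" where
  "lower_computable_sm r \<longleftrightarrow> semi_measure r \<and>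
     (\<exists>f. rec_fun f \<and> (\<forall>s. (\<lambda>n. real_of_rat (f n s)) \<longlonglongrightarrow> r s)
          \<and> (\<forall>n s. f n s \<le> f (Suc n) s))"

definition universal_probability :: "(bool list \<Rightarrow> real) \<Rightarrow> bool" where
  "universal_probability m \<longleftrightarrow> lower_computable_sm m \<and>
     (\<forall>r. lower_computable_sm r \<longrightarrow> (\<exists>c>0. \<forall>s. c * r s \<le> m s))"

definition semi_POVM :: "(bool list \<Rightarrow> complex ^ 'n ^ 'n) \<Rightarrow> bool" where
  "semi_POVM R \<longleftrightarrow> (\<forall>s. hermitian (R s) \<and> loewner_le 0 (R s)) \<and>
     (\<forall>F. finite F \<longrightarrow> loewner_le (sum R F) (mat 1))"

definition rec_herQ_fun :: "(nat \<Rightarrow> bool list \<Rightarrow> complex ^ 'n ^ 'n) \<Rightarrow> bool" where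
  "rec_herQ_fun f \<longleftrightarrow> (\<forall>n s. hermitian (f n s)) \<and>
     (\<forall>i j. \<exists>gre gim. rec_fun gre \<and> rec_fun gim \<and>
        (\<forall>n s. f n s $ i $ j = Complex (of_rat (gre n s)) (of_rat (gim n s))))"

definition lower_computable_sPOVM :: "(bool list \<Rightarrow> complex ^ 'n ^ 'n) \<Rightarrow> bool" where
  "lower_computable_sPOVM R \<longleftrightarrow> semi_POVM R \<and>
     (\<exists>f. rec_herQ_fun f \<and> (\<forall>s. (\<lambda>n. f n s) \<longlonglongrightarrow> R s) \<and> (\<forall>n s. loewner_le (f n s) (R s)))"

definition universal_sPOVM :: "(bool list \<Rightarrow> complex ^ 'n ^ 'n) \<Rightarrow> bool" where
  "universal_sPOVM M \<longleftrightarrow> lower_computable_sPOVM M \<and>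
     (\<forall>R :: bool list \<Rightarrow> complex ^ 'n ^ 'n. lower_computable_sPOVM R \<longrightarrow>
        (\<exists>c>0. \<forall>s. loewner_le (c *\<^sub>R R s) (M s)))"

end

(*
  Universality is the easy half: for a lower-computable semi-measure r, the map s |-> r(s) I is a
  lower-computable semi-POVM, so c r(s) I <= M(s) for some c > 0, and evaluating the quadratic
  form at the unit vector x gives c r(s) <= x* M(s) x.

  M(s) is the limit of rational Hermitian lower bounds
  f_n(s), and x the limit of rational vectors y_n with |x_i - y_n,i| <= 2/2^n. The rational number
  y_n* f_n(s) y_n, minus an explicit bound for the error of replacing x by y_n, is a computable
  lower bound for x* f_n(s) x <= x* M(s) x, and these bounds converge to x* M(s) x; their running
  maximum is the required increasing approximation. Computability is Kleene's mu-recursion on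
  natural numbers, transported to rationals through the code rcode.
*)

theory Submission
  imports Defs
begin

named_theorems recursive_intros and recursive_rat_intros

section \<open>\<mu>-recursive functions on natural numbers\<close>

definition recursive :: "nat \<Rightarrow> (nat list \<Rightarrow> nat) \<Rightarrow> bool" where
  "recursive k F \<longleftrightarrow> (\<exists>r. \<forall>xs. length xs = k \<longrightarrow> eval r xs (F xs))"

lemma recursive_cong: "recursive k F \<Longrightarrow> (\<And>xs. length xs = k \<Longrightarrow> F xs = G xs) \<Longrightarrow> recursive k G"
  unfolding recursive_def by metis

lemma recursive_cong':
  "recursive k F \<Longrightarrow> k = k' \<Longrightarrow> (\<And>xs. length xs = k \<Longrightarrow> F xs = G xs) \<Longrightarrow> recursive k' G"
  unfolding recursive_def by metis

lemma recursive_const [recursive_intros]: "recursive k (\<lambda>_. c)"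
proof (induction c)
  case 0
  show ?case unfolding recursive_def by (intro exI[of _ Zero]) (auto intro: eval_Zero)
next
  case (Suc c)
  then obtain r where r: "\<forall>xs. length xs = k \<longrightarrow> eval r xs c" unfolding recursive_def by auto
  show ?case unfolding recursive_def
  proof (intro exI[of _ "Comp Succ [r]"] allI impI)
    fix xs :: "nat list" assume "length xs = k"
    then show "eval (Comp Succ [r]) xs (Suc c)"
      using r by (intro eval_Comp[where ys="[c]"]) (auto intro: eval_Succ[of c "[]", simplified])
  qed
qed

lemma recursive_proj [recursive_intros]: "i < k \<Longrightarrow> recursive k (\<lambda>xs. xs ! i)"
  unfolding recursive_def by (intro exI[of _ "Proj i"]) (auto intro: eval_Proj)

lemma recursive_comp:
  assumes "recursive m F" "length Gs = m" "\<forall>G\<in>set Gs. recursive k G"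
  shows "recursive k (\<lambda>xs. F (map (\<lambda>G. G xs) Gs))"
proof -
  have "\<exists>rs. \<forall>xs. length xs = k \<longrightarrow> list_all2 (\<lambda>g y. eval g xs y) rs (map (\<lambda>G. G xs) Gs)"
    using assms(3)
  proof (induction Gs)
    case Nil
    show ?case by (intro exI[of _ "[]"]) simp
  next
    case (Cons G Gs)
    then obtain rs where rs: "\<forall>xs. length xs = k \<longrightarrow> list_all2 (\<lambda>g y. eval g xs y) rs (map (\<lambda>G. G xs) Gs)"
      by auto
    from Cons.prems obtain r where r: "\<forall>xs. length xs = k \<longrightarrow> eval r xs (G xs)"
      unfolding recursive_def by auto
    show ?case by (intro exI[of _ "r # rs"]) (simp add: rs r)
  qed
  then obtain rs where rs: "\<forall>xs. length xs = k \<longrightarrow> list_all2 (\<lambda>g y. eval g xs y) rs (map (\<lambda>G. G xs) Gs)"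
    by auto
  from assms(1) obtain f where f: "\<forall>ys. length ys = m \<longrightarrow> eval f ys (F ys)" unfolding recursive_def by auto
  show ?thesis unfolding recursive_def
  proof (intro exI[of _ "Comp f rs"] allI impI)
    fix xs :: "nat list" assume "length xs = k"
    then show "eval (Comp f rs) xs (F (map (\<lambda>G. G xs) Gs))"
      using rs f assms(2) by (intro eval_Comp) auto
  qed
qed

fun natrec :: "(nat list \<Rightarrow> nat) \<Rightarrow> (nat list \<Rightarrow> nat) \<Rightarrow> nat \<Rightarrow> nat list \<Rightarrow> nat" where
  "natrec F G 0 ys = F ys"
| "natrec F G (Suc n) ys = G (natrec F G n ys # n # ys)"

lemma recursive_prim:
  assumes "recursive k F" "recursive (Suc (Suc k)) G"
  shows "recursive (Suc k) (\<lambda>xs. natrec F G (hd xs) (tl xs))"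
proof -
  obtain f where f: "\<forall>ys. length ys = k \<longrightarrow> eval f ys (F ys)"
    using assms(1) unfolding recursive_def by auto
  obtain g where g: "\<forall>ys. length ys = Suc (Suc k) \<longrightarrow> eval g ys (G ys)"
    using assms(2) unfolding recursive_def by auto
  have *: "eval (Prim f g) (n # ys) (natrec F G n ys)" if "length ys = k" for n ys
  proof (induction n)
    case 0 then show ?case using f that by (auto intro: eval_Prim0)
  next
    case (Suc n) then show ?case using g that by (auto intro: eval_PrimS)
  qed
  show ?thesis unfolding recursive_def
  proof (intro exI[of _ "Prim f g"] allI impI)
    fix xs :: "nat list" assume "length xs = Suc k"
    then obtain n ys where "xs = n # ys" "length ys = k" by (cases xs) auto
    then show "eval (Prim f g) xs (natrec F G (hd xs) (tl xs))" using * by simp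
  qed
qed

lemma recursive_mu:
  assumes "recursive (Suc k) F" "\<And>xs. length xs = k \<Longrightarrow> \<exists>n. F (n # xs) = 0"
  shows "recursive k (\<lambda>xs. LEAST n. F (n # xs) = 0)"
proof -
  obtain f where f: "\<forall>ys. length ys = Suc k \<longrightarrow> eval f ys (F ys)"
    using assms(1) unfolding recursive_def by auto
  show ?thesis unfolding recursive_def
  proof (intro exI[of _ "Mu f"] allI impI)
    fix xs :: "nat list" assume len: "length xs = k"
    define n where "n = (LEAST n. F (n # xs) = 0)"
    have "F (n # xs) = 0" unfolding n_def using assms(2)[OF len] by (rule LeastI_ex)
    moreover have "F (m # xs) \<noteq> 0" if "m < n" for m using not_less_Least[OF that[unfolded n_def]] .
    ultimately show "eval (Mu f) xs (LEAST n. F (n # xs) = 0)"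
      unfolding n_def[symmetric] using f len
      by (intro eval_Mu) (metis length_Cons, metis length_Cons neq0_conv)
  qed
qed

lemma recursive_comp1: "recursive 1 F \<Longrightarrow> recursive k G \<Longrightarrow> recursive k (\<lambda>xs. F [G xs])"
  using recursive_comp[of 1 F "[G]" k] by simp

lemma recursive_comp2:
  "recursive 2 F \<Longrightarrow> recursive k G \<Longrightarrow> recursive k H \<Longrightarrow> recursive k (\<lambda>xs. F [G xs, H xs])"
  using recursive_comp[of 2 F "[G, H]" k] by simp

lemma recursive_tl: "recursive k F \<Longrightarrow> recursive (Suc k) (\<lambda>xs. F (tl xs))"
proof -
  assume a: "recursive k F"
  have "recursive (Suc k) (\<lambda>xs. F (map (\<lambda>G. G xs) (map (\<lambda>i xs. xs ! Suc i) [0..<k])))"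
    by (rule recursive_comp[OF a]) (auto intro: recursive_proj)
  then show ?thesis
    by (rule recursive_cong) (auto simp: map_nth[symmetric] nth_tl intro!: arg_cong[where f=F] nth_equalityI)
qed

lemma recursive_binop:
  assumes "recursive 2 B" "\<And>a b. B [a, b] = f a b" "recursive k G" "recursive k H"
  shows "recursive k (\<lambda>xs. f (G xs) (H xs))"
  using recursive_comp2[OF assms(1) assms(3,4)] by (simp add: assms(2))

lemma recursive_unop:
  assumes "recursive 1 B" "\<And>a. B [a] = f a" "recursive k G"
  shows "recursive k (\<lambda>xs. f (G xs))"
  using recursive_comp1[OF assms(1) assms(3)] by (simp add: assms(2))

lemma recursive_Suc1: "recursive 1 (\<lambda>xs. Suc (xs ! 0))"
  unfolding recursive_def by (intro exI[of _ Succ]) (auto simp: length_Suc_conv intro: eval_Succ)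

lemma recursive_Suc [recursive_intros]: "recursive k G \<Longrightarrow> recursive k (\<lambda>xs. Suc (G xs))"
  by (rule recursive_unop[OF recursive_Suc1]) auto

lemma natrec_add: "natrec (\<lambda>ys. ys ! 0) (\<lambda>zs. Suc (zs ! 0)) a [b] = a + b"
  by (induction a) auto

lemma recursive_add2: "recursive 2 (\<lambda>xs. xs ! 0 + xs ! 1)"
proof -
  have "recursive (Suc 1) (\<lambda>xs. natrec (\<lambda>ys. ys ! 0) (\<lambda>zs. Suc (zs ! 0)) (hd xs) (tl xs))"
    by (rule recursive_prim) (intro recursive_intros; simp)+
  then show ?thesis
    by (rule recursive_cong') (auto simp: length_Suc_conv natrec_add[simplified])
qed

lemma recursive_add [recursive_intros]:
  "recursive k G \<Longrightarrow> recursive k H \<Longrightarrow> recursive k (\<lambda>xs. G xs + H xs)"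
  by (rule recursive_binop[OF recursive_add2]) auto

lemma natrec_mult: "natrec (\<lambda>ys. 0) (\<lambda>zs. zs ! 0 + zs ! 2) a [b] = a * b"
  by (induction a) auto

lemma recursive_mult2: "recursive 2 (\<lambda>xs. xs ! 0 * xs ! 1)"
proof -
  have "recursive (Suc 1) (\<lambda>xs. natrec (\<lambda>ys. 0) (\<lambda>zs. zs ! 0 + zs ! 2) (hd xs) (tl xs))"
    by (rule recursive_prim) (intro recursive_intros; simp)+
  then show ?thesis
    by (rule recursive_cong') (auto simp: length_Suc_conv natrec_mult[simplified])
qed

lemma recursive_mult [recursive_intros]:
  "recursive k G \<Longrightarrow> recursive k H \<Longrightarrow> recursive k (\<lambda>xs. G xs * H xs)"
  by (rule recursive_binop[OF recursive_mult2]) auto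

lemma natrec_pred: "natrec (\<lambda>ys. 0) (\<lambda>zs. zs ! 1) a [] = a - 1"
  by (induction a) auto

lemma recursive_pred1: "recursive 1 (\<lambda>xs. xs ! 0 - 1)"
proof -
  have "recursive (Suc 0) (\<lambda>xs. natrec (\<lambda>ys. 0) (\<lambda>zs. zs ! 1) (hd xs) (tl xs))"
    by (rule recursive_prim) (intro recursive_intros; simp)+
  then show ?thesis
    by (rule recursive_cong') (auto simp: length_Suc_conv natrec_pred[simplified])
qed

lemma recursive_pred: "recursive k G \<Longrightarrow> recursive k (\<lambda>xs. G xs - 1)"
  by (rule recursive_unop[OF recursive_pred1]) auto

lemma natrec_sub: "natrec (\<lambda>ys. ys ! 0) (\<lambda>zs. zs ! 0 - 1) a [b] = b - a"
  by (induction a) auto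

lemma recursive_sub2: "recursive 2 (\<lambda>xs. xs ! 1 - xs ! 0)"
proof -
  have "recursive (Suc 1) (\<lambda>xs. natrec (\<lambda>ys. ys ! 0) (\<lambda>zs. zs ! 0 - 1) (hd xs) (tl xs))"
    by (rule recursive_prim) (intro recursive_intros recursive_pred; simp)+
  then show ?thesis
    by (rule recursive_cong') (auto simp: length_Suc_conv natrec_sub[simplified])
qed

lemma recursive_sub [recursive_intros]:
  "recursive k G \<Longrightarrow> recursive k H \<Longrightarrow> recursive k (\<lambda>xs. G xs - H xs)"
  using recursive_binop[OF recursive_sub2, of "\<lambda>a b. b - a" k H G] by auto

lemma recursive_if0 [recursive_intros]:
  assumes "recursive k C" "recursive k A" "recursive k B"
  shows "recursive k (\<lambda>xs. if C xs = 0 then A xs else B xs)"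
proof -
  have "recursive k (\<lambda>xs. A xs * (1 - C xs) + B xs * (1 - (1 - C xs)))"
    by (intro recursive_intros assms)
  then show ?thesis by (rule recursive_cong) auto
qed

lemma recursive_ifle [recursive_intros]:
  assumes "recursive k G" "recursive k H" "recursive k A" "recursive k B"
  shows "recursive k (\<lambda>xs. if G xs \<le> H xs then A xs else B xs)"
proof -
  have "recursive k (\<lambda>xs. if G xs - H xs = 0 then A xs else B xs)"
    by (intro recursive_intros assms)
  then show ?thesis by (rule recursive_cong) auto
qed

lemma recursive_max [recursive_intros]:
  "recursive k G \<Longrightarrow> recursive k H \<Longrightarrow> recursive k (\<lambda>xs. max (G xs) (H xs))"
  unfolding max_def by (intro recursive_intros)

lemma Least_div2: "(LEAST d. a \<le> Suc (2 * d)) = a div 2"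
  by (rule Least_equality) auto

lemma recursive_div2_1: "recursive 1 (\<lambda>xs. xs ! 0 div 2)"
proof -
  have "recursive (Suc 0) (\<lambda>xs. LEAST n. (\<lambda>zs. Suc (zs ! 1) - (2 * zs ! 0 + 2)) (n # xs) = 0)"
  proof (rule recursive_mu)
    show "recursive (Suc (Suc 0)) (\<lambda>zs. Suc (zs ! 1) - (2 * zs ! 0 + 2))"
      by (intro recursive_intros) auto
    fix xs :: "nat list" assume "length xs = Suc 0"
    show "\<exists>n. Suc ((n # xs) ! 1) - (2 * (n # xs) ! 0 + 2) = 0"
      by (intro exI[of _ "xs ! 0"]) auto
  qed
  then show ?thesis by (rule recursive_cong') (auto simp: length_Suc_conv Least_div2)
qed

lemma recursive_div2 [recursive_intros]: "recursive k G \<Longrightarrow> recursive k (\<lambda>xs. G xs div 2)"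
  by (rule recursive_unop[OF recursive_div2_1]) auto

lemma recursive_mod2 [recursive_intros]: "recursive k G \<Longrightarrow> recursive k (\<lambda>xs. G xs mod 2)"
proof -
  assume "recursive k G"
  then have "recursive k (\<lambda>xs. G xs - 2 * (G xs div 2))" by (intro recursive_intros)
  then show ?thesis by (rule recursive_cong) (simp add: minus_mult_div_eq_mod)
qed

lemma recursive_ifeven [recursive_intros]:
  assumes "recursive k G" "recursive k A" "recursive k B"
  shows "recursive k (\<lambda>xs. if even (G xs) then A xs else B xs)"
proof -
  have "recursive k (\<lambda>xs. if G xs mod 2 = 0 then A xs else B xs)"
    by (intro recursive_intros assms)
  then show ?thesis by (rule recursive_cong) (auto simp: even_iff_mod_2_eq_zero)
qed

lemma recursive_triangle [recursive_intros]: "recursive k G \<Longrightarrow> recursive k (\<lambda>xs. triangle (G xs))"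
  unfolding triangle_def by (intro recursive_intros)

lemma recursive_prod_encode [recursive_intros]:
  "recursive k G \<Longrightarrow> recursive k H \<Longrightarrow> recursive k (\<lambda>xs. prod_encode (G xs, H xs))"
  unfolding prod_encode_def by (simp, intro recursive_intros)

definition diag_index :: "nat \<Rightarrow> nat" where
  "diag_index c = (LEAST t. Suc c - triangle (Suc t) = 0)"

lemma le_triangle: "n \<le> triangle n"
  by (induction n) auto

lemma prod_decode_diag_index:
  "prod_decode c = (c - triangle (diag_index c), diag_index c - (c - triangle (diag_index c)))"
proof -
  define t where "t = diag_index c"
  have ex: "Suc c - triangle (Suc c) = 0" using le_triangle[of c] by simp
  have c1: "c < triangle (Suc t)"
    using LeastI[of "\<lambda>t. Suc c - triangle (Suc t) = 0", OF ex] unfolding t_def diag_index_def by simp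
  have c2: "triangle t \<le> c"
  proof (cases t)
    case 0 then show ?thesis by simp
  next
    case (Suc t')
    then have "t' < t" by simp
    then have "\<not> (Suc c - triangle (Suc t') = 0)"
      unfolding t_def diag_index_def by (rule not_less_Least)
    then show ?thesis using Suc by simp
  qed
  define a where "a = c - triangle t"
  have "a \<le> t" using c1 c2 unfolding a_def by simp
  then have "prod_encode (a, t - a) = c" unfolding prod_encode_def a_def using c2 by simp
  then have "prod_decode c = (a, t - a)" by (metis prod_encode_inverse)
  then show ?thesis unfolding a_def t_def by simp
qed

lemma recursive_diag_index1: "recursive 1 (\<lambda>xs. diag_index (xs ! 0))"
proof -
  have "recursive (Suc 0) (\<lambda>xs. LEAST n. (\<lambda>zs. Suc (zs ! 1) - triangle (Suc (zs ! 0))) (n # xs) = 0)"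
  proof (rule recursive_mu)
    show "recursive (Suc (Suc 0)) (\<lambda>zs. Suc (zs ! 1) - triangle (Suc (zs ! 0)))"
      by (intro recursive_intros) auto
    fix xs :: "nat list" assume "length xs = Suc 0"
    show "\<exists>n. Suc ((n # xs) ! 1) - triangle (Suc ((n # xs) ! 0)) = 0"
      using le_triangle[of "xs ! 0"] by (intro exI[of _ "xs ! 0"]) auto
  qed
  then show ?thesis by (rule recursive_cong') (auto simp: length_Suc_conv diag_index_def)
qed

lemma recursive_diag_index: "recursive k G \<Longrightarrow> recursive k (\<lambda>xs. diag_index (G xs))"
  by (rule recursive_unop[OF recursive_diag_index1]) auto

lemma recursive_fst_decode [recursive_intros]:
  "recursive k G \<Longrightarrow> recursive k (\<lambda>xs. fst (prod_decode (G xs)))"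
  unfolding prod_decode_diag_index by (simp, intro recursive_intros recursive_diag_index)

lemma recursive_snd_decode [recursive_intros]:
  "recursive k G \<Longrightarrow> recursive k (\<lambda>xs. snd (prod_decode (G xs)))"
  unfolding prod_decode_diag_index by (simp, intro recursive_intros recursive_diag_index)

lemma natrec_pow2: "natrec (\<lambda>ys. 1) (\<lambda>zs. 2 * zs ! 0) a [] = 2 ^ a"
  by (induction a) auto

lemma recursive_pow2_1: "recursive 1 (\<lambda>xs. 2 ^ (xs ! 0))"
proof -
  have "recursive (Suc 0) (\<lambda>xs. natrec (\<lambda>ys. 1) (\<lambda>zs. 2 * zs ! 0) (hd xs) (tl xs))"
    by (rule recursive_prim) (intro recursive_intros; simp)+
  then show ?thesis
    by (rule recursive_cong') (auto simp: length_Suc_conv natrec_pow2[simplified])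
qed

lemma recursive_pow2 [recursive_intros]: "recursive k G \<Longrightarrow> recursive k (\<lambda>xs. 2 ^ (G xs))"
  by (rule recursive_unop[OF recursive_pow2_1]) auto

section \<open>Recursive functions with rational values\<close>

text \<open>The integer coded by \<open>u\<close> is \<open>int_code_pos u - int_code_neg u\<close>, which reduces
  arithmetic on codes of rationals to arithmetic on natural numbers. The \<open>max 1\<close> in \<open>code_den\<close>
  only matters for numbers that are not codes.\<close>

definition int_code_pos :: "nat \<Rightarrow> nat" where
  "int_code_pos u = (if even u then u div 2 else 0)"

definition int_code_neg :: "nat \<Rightarrow> nat" where
  "int_code_neg u = (if even u then 0 else Suc (u div 2))"

definition code_num_pos :: "nat \<Rightarrow> nat" where
  "code_num_pos c = int_code_pos (fst (prod_decode c))"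

definition code_num_neg :: "nat \<Rightarrow> nat" where
  "code_num_neg c = int_code_neg (fst (prod_decode c))"

definition code_den :: "nat \<Rightarrow> nat" where
  "code_den c = max 1 (snd (prod_decode c) div 2)"

definition rat_decode :: "nat \<Rightarrow> rat" where
  "rat_decode c = (of_nat (code_num_pos c) - of_nat (code_num_neg c)) / of_nat (code_den c)"

lemma recursive_int_code_pos [recursive_intros]:
  "recursive k G \<Longrightarrow> recursive k (\<lambda>xs. int_code_pos (G xs))"
  unfolding int_code_pos_def by (intro recursive_intros)

lemma recursive_int_code_neg [recursive_intros]:
  "recursive k G \<Longrightarrow> recursive k (\<lambda>xs. int_code_neg (G xs))"
  unfolding int_code_neg_def by (intro recursive_intros)

lemma recursive_code_num_pos [recursive_intros]:
  "recursive k G \<Longrightarrow> recursive k (\<lambda>xs. code_num_pos (G xs))"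
  unfolding code_num_pos_def by (intro recursive_intros)

lemma recursive_code_num_neg [recursive_intros]:
  "recursive k G \<Longrightarrow> recursive k (\<lambda>xs. code_num_neg (G xs))"
  unfolding code_num_neg_def by (intro recursive_intros)

lemma recursive_code_den [recursive_intros]: "recursive k G \<Longrightarrow> recursive k (\<lambda>xs. code_den (G xs))"
  unfolding code_den_def by (intro recursive_intros)

lemma code_den_pos: "code_den c \<ge> 1" unfolding code_den_def by simp

lemma int_decode_pos_neg: "int_decode u = int (int_code_pos u) - int (int_code_neg u)"
  unfolding int_decode_def sum_decode_def int_code_pos_def int_code_neg_def by auto

lemma int_encode_nonneg: "0 \<le> i \<Longrightarrow> int_encode i = 2 * nat i"
  unfolding int_encode_def sum_encode_def by simp

lemma prod_decode_rcode:
  assumes "quotient_of q = (a, b)"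
  shows "prod_decode (rcode q) = (int_encode a, int_encode b)"
  using assms unfolding rcode_def by simp

lemma rat_decode_rcode [simp]: "rat_decode (rcode q) = q"
proof -
  obtain a b where ab: "quotient_of q = (a, b)" by (cases "quotient_of q") auto
  have b: "b > 0" using quotient_of_denom_pos[OF ab] .
  have "int (code_num_pos (rcode q)) - int (code_num_neg (rcode q)) = a"
    using int_decode_pos_neg[of "int_encode a"] prod_decode_rcode[OF ab]
    unfolding code_num_pos_def code_num_neg_def by simp
  then have "of_nat (code_num_pos (rcode q)) - of_nat (code_num_neg (rcode q)) = (of_int a :: rat)"
    by (metis of_int_diff of_int_of_nat_eq)
  moreover have "code_den (rcode q) = nat b"
    using prod_decode_rcode[OF ab] b unfolding code_den_def by (simp add: int_encode_nonneg)
  ultimately show ?thesis unfolding rat_decode_def using b quotient_of_div[OF ab] by simp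
qed

lemma triangle_mono: "a \<le> b \<Longrightarrow> triangle a \<le> triangle b"
  by (induction b rule: dec_induct) auto

lemma prod_encode_mono: "a \<le> a' \<Longrightarrow> b \<le> b' \<Longrightarrow> prod_encode (a, b) \<le> prod_encode (a', b')"
  unfolding prod_encode_def using triangle_mono[of "a + b" "a' + b'"] by simp

lemma int_encode_mult_mono:
  assumes "k \<ge> 1" shows "int_encode a \<le> int_encode (k * a)"
proof (cases "0 \<le> a")
  case True
  then have "a \<le> k * a" using assms by (simp add: mult_le_cancel_right1)
  then show ?thesis using True assms unfolding int_encode_def sum_encode_def by auto
next
  case False
  then have "k * a \<le> a" using assms by (simp add: mult_le_cancel_right2)
  then have "nat (- a - 1) \<le> nat (- (k * a) - 1)" by (intro nat_mono) simp
  moreover have "k * a < 0" using False assms by (simp add: mult_pos_neg)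
  ultimately show ?thesis using False unfolding int_encode_def sum_encode_def by auto
qed

lemma rcode_le_unreduced:
  assumes "b' > 0" "of_int a' / of_int b' = q"
  shows "rcode q \<le> prod_encode (int_encode a', int_encode b')"
proof -
  obtain a b where ab: "quotient_of q = (a, b)" by (cases "quotient_of q") auto
  have b: "b > 0" using quotient_of_denom_pos[OF ab] .
  have cop: "coprime a b" using quotient_of_coprime[OF ab] .
  have "of_int a' / of_int b' = (of_int a / of_int b :: rat)" using assms quotient_of_div[OF ab] by simp
  then have eq: "a' * b = a * b'" using b assms(1)
    by (simp add: field_simps) (metis of_int_eq_iff of_int_mult)
  then have "b dvd a * b'" by (metis dvd_triv_right)
  then have "b dvd b'" using cop by (metis coprime_commute coprime_dvd_mult_right_iff)
  then obtain k where k: "b' = b * k" by (auto simp: dvd_def)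
  have kpos: "k \<ge> 1" using k b assms(1) by (metis int_one_le_iff_zero_less zero_less_mult_pos)
  have a': "a' = k * a" using eq k b by (simp add: algebra_simps)
  have "rcode q = prod_encode (int_encode a, int_encode b)" unfolding rcode_def ab by simp
  also have "\<dots> \<le> prod_encode (int_encode (k * a), int_encode (k * b))"
    by (intro prod_encode_mono int_encode_mult_mono kpos)
  finally show ?thesis using a' k by (simp add: mult.commute)
qed

text \<open>\<open>frac_code_defect c P N B\<close> vanishes iff \<open>c\<close> codes a fraction \<open>a/b\<close> with \<open>b \<ge> 1\<close> and
  \<open>a/b = (P - N)/B\<close>. As \<open>rcode\<close> uses the reduced fraction and \<open>prod_encode\<close> is monotone, the
  least such code is \<open>rcode ((P - N)/B)\<close>: this is how the \<mu>-operator normalises fractions.\<close>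

definition frac_code_defect :: "nat \<Rightarrow> nat \<Rightarrow> nat \<Rightarrow> nat \<Rightarrow> nat" where
  "frac_code_defect c P N B =
     (let u = fst (prod_decode c); v = snd (prod_decode c); b = v div 2;
          lhs = int_code_pos u * B + N * b; rhs = P * b + int_code_neg u * B
      in v mod 2 + (1 - b) + (lhs - rhs) + (rhs - lhs))"

lemma frac_code_defect_zero_iff:
  "frac_code_defect c P N B = 0 \<longleftrightarrow>
     even (snd (prod_decode c)) \<and> snd (prod_decode c) div 2 \<ge> 1 \<and>
     int_code_pos (fst (prod_decode c)) * B + N * (snd (prod_decode c) div 2) =
       P * (snd (prod_decode c) div 2) + int_code_neg (fst (prod_decode c)) * B"
  unfolding frac_code_defect_def Let_def by auto

lemma frac_code_defect_rcode:
  fixes P N B :: nat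
  defines "q \<equiv> (of_nat P - of_nat N) / of_nat (max 1 B) :: rat"
  shows "frac_code_defect (rcode q) P N (max 1 B) = 0"
proof -
  obtain a b where ab: "quotient_of q = (a, b)" by (cases "quotient_of q") auto
  have b: "b > 0" using quotient_of_denom_pos[OF ab] .
  have dec: "prod_decode (rcode q) = (int_encode a, 2 * nat b)"
    using prod_decode_rcode[OF ab] b by (simp add: int_encode_nonneg)
  have "of_int a * of_nat (max 1 B) = (of_nat P - of_nat N) * (of_int b :: rat)"
    using quotient_of_div[OF ab] b unfolding q_def by (simp add: field_simps)
  then have "a * int (max 1 B) = (int P - int N) * b"
    by (metis (mono_tags) of_int_eq_iff of_int_mult of_int_of_nat_eq of_int_diff)
  then have "(int (int_code_pos (int_encode a)) - int (int_code_neg (int_encode a))) * int (max 1 B) =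
      (int P - int N) * int (nat b)"
    using b int_decode_pos_neg[of "int_encode a"] by simp
  then have "int (int_code_pos (int_encode a) * max 1 B + N * nat b) =
      int (P * nat b + int_code_neg (int_encode a) * max 1 B)"
    by (simp add: algebra_simps)
  then have "int_code_pos (int_encode a) * max 1 B + N * nat b =
      P * nat b + int_code_neg (int_encode a) * max 1 B"
    using of_nat_eq_iff by blast
  then show ?thesis
    unfolding frac_code_defect_zero_iff dec using b by simp
qed

lemma Least_frac_code_defect:
  fixes P N B :: nat
  defines "q \<equiv> (of_nat P - of_nat N) / of_nat (max 1 B) :: rat"
  shows "(LEAST c. frac_code_defect c P N (max 1 B) = 0) = rcode q"
proof (rule Least_equality)
  show "frac_code_defect (rcode q) P N (max 1 B) = 0"
    unfolding q_def by (rule frac_code_defect_rcode)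
next
  fix c
  define u b' where "u = fst (prod_decode c)" and "b' = snd (prod_decode c) div 2"
  assume "frac_code_defect c P N (max 1 B) = 0"
  then have h: "even (snd (prod_decode c))" "b' \<ge> 1"
    "int_code_pos u * max 1 B + N * b' = P * b' + int_code_neg u * max 1 B"
    unfolding frac_code_defect_zero_iff u_def b'_def by auto
  have c: "c = prod_encode (u, 2 * b')" unfolding u_def b'_def using h(1)
    by (metis dvd_mult_div_cancel prod.collapse prod_decode_inverse)
  have "int_decode u * int (max 1 B) = (int P - int N) * int b'"
    using arg_cong[OF h(3), of int] unfolding int_decode_pos_neg by (simp add: algebra_simps)
  then have "of_int (int_decode u) * of_nat (max 1 B) = (of_nat P - of_nat N) * (of_nat b' :: rat)"
    by (metis (mono_tags) of_int_eq_iff of_int_mult of_int_of_nat_eq of_int_diff)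
  then have "of_int (int_decode u) / of_int (int b') = q"
    unfolding q_def using h(2) by (simp add: field_simps)
  then have "rcode q \<le> prod_encode (int_encode (int_decode u), int_encode (int b'))"
    using h(2) by (intro rcode_le_unreduced) auto
  also have "\<dots> = c" using c by (simp add: int_encode_nonneg)
  finally show "rcode q \<le> c" .
qed

definition recursive_rat :: "nat \<Rightarrow> (nat list \<Rightarrow> rat) \<Rightarrow> bool" where
  "recursive_rat k F \<longleftrightarrow> recursive k (\<lambda>xs. rcode (F xs))"

lemma recursive_rat_cong:
  "recursive_rat k F \<Longrightarrow> (\<And>xs. length xs = k \<Longrightarrow> F xs = G xs) \<Longrightarrow> recursive_rat k G"
  unfolding recursive_rat_def by (erule recursive_cong) simp

lemma recursive_rat_const [recursive_rat_intros]: "recursive_rat k (\<lambda>_. q)"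
  unfolding recursive_rat_def by (rule recursive_const)

lemma recursive_rat_frac:
  assumes "recursive k P" "recursive k N" "recursive k B"
  shows "recursive_rat k (\<lambda>xs. (of_nat (P xs) - of_nat (N xs)) / of_nat (max 1 (B xs)))"
proof -
  let ?D = "\<lambda>zs. frac_code_defect (zs ! 0) (P (tl zs)) (N (tl zs)) (max 1 (B (tl zs)))"
  have "recursive k (\<lambda>xs. LEAST c. ?D (c # xs) = 0)"
  proof (rule recursive_mu)
    show "recursive (Suc k) ?D"
      unfolding frac_code_defect_def Let_def by (intro recursive_intros recursive_tl assms) auto
    show "\<exists>c. ?D (c # xs) = 0" for xs
      using frac_code_defect_rcode[of "P xs" "N xs" "B xs"] by auto
  qed
  then show ?thesis
    unfolding recursive_rat_def by (rule recursive_cong) (simp add: Least_frac_code_defect[simplified])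
qed

lemma rat_decode_eq_frac:
  "rat_decode c = (of_nat (code_num_pos c) - of_nat (code_num_neg c)) / of_nat (max 1 (code_den c))"
  unfolding rat_decode_def using code_den_pos[of c] by (simp add: max_def)

lemma recursive_rat_decode [recursive_rat_intros]:
  "recursive k G \<Longrightarrow> recursive_rat k (\<lambda>xs. rat_decode (G xs))"
  unfolding rat_decode_eq_frac by (intro recursive_rat_frac recursive_intros)

lemma rat_decode_add:
  "rat_decode c1 + rat_decode c2 =
     (of_nat (code_num_pos c1 * code_den c2 + code_num_pos c2 * code_den c1)
      - of_nat (code_num_neg c1 * code_den c2 + code_num_neg c2 * code_den c1))
     / of_nat (max 1 (code_den c1 * code_den c2))"
  using code_den_pos[of c1] code_den_pos[of c2]
  unfolding rat_decode_def by (simp add: field_simps max_def)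

lemma rat_decode_mult:
  "rat_decode c1 * rat_decode c2 =
     (of_nat (code_num_pos c1 * code_num_pos c2 + code_num_neg c1 * code_num_neg c2)
      - of_nat (code_num_pos c1 * code_num_neg c2 + code_num_neg c1 * code_num_pos c2))
     / of_nat (max 1 (code_den c1 * code_den c2))"
  using code_den_pos[of c1] code_den_pos[of c2]
  unfolding rat_decode_def by (simp add: field_simps max_def)

lemma rat_decode_uminus:
  "- rat_decode c = (of_nat (code_num_neg c) - of_nat (code_num_pos c)) / of_nat (max 1 (code_den c))"
  unfolding rat_decode_eq_frac by (simp add: field_simps)

lemma recursive_rat_add [recursive_rat_intros]:
  assumes "recursive_rat k F" "recursive_rat k G"
  shows "recursive_rat k (\<lambda>xs. F xs + G xs)"
proof -
  have "recursive_rat k (\<lambda>xs. rat_decode (rcode (F xs)) + rat_decode (rcode (G xs)))"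
    unfolding rat_decode_add using assms[unfolded recursive_rat_def]
    by (intro recursive_rat_frac recursive_intros)
  then show ?thesis by simp
qed

lemma recursive_rat_mult [recursive_rat_intros]:
  assumes "recursive_rat k F" "recursive_rat k G"
  shows "recursive_rat k (\<lambda>xs. F xs * G xs)"
proof -
  have "recursive_rat k (\<lambda>xs. rat_decode (rcode (F xs)) * rat_decode (rcode (G xs)))"
    unfolding rat_decode_mult using assms[unfolded recursive_rat_def]
    by (intro recursive_rat_frac recursive_intros)
  then show ?thesis by simp
qed

lemma recursive_rat_uminus [recursive_rat_intros]:
  assumes "recursive_rat k F"
  shows "recursive_rat k (\<lambda>xs. - F xs)"
proof -
  have "recursive_rat k (\<lambda>xs. - rat_decode (rcode (F xs)))"
    unfolding rat_decode_uminus using assms[unfolded recursive_rat_def]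
    by (intro recursive_rat_frac recursive_intros)
  then show ?thesis by simp
qed

lemma recursive_rat_diff [recursive_rat_intros]:
  "recursive_rat k F \<Longrightarrow> recursive_rat k G \<Longrightarrow> recursive_rat k (\<lambda>xs. F xs - G xs)"
  by (drule recursive_rat_add[OF _ recursive_rat_uminus]) simp_all

lemma rat_decode_le_iff:
  "rat_decode c1 \<le> rat_decode c2 \<longleftrightarrow>
     code_num_pos c1 * code_den c2 + code_num_neg c2 * code_den c1
       \<le> code_num_pos c2 * code_den c1 + code_num_neg c1 * code_den c2"
proof -
  have "(0::rat) < of_nat (code_den c1)" "(0::rat) < of_nat (code_den c2)"
    using code_den_pos[of c1] code_den_pos[of c2] by auto
  then have "rat_decode c1 \<le> rat_decode c2 \<longleftrightarrow>
      (of_nat (code_num_pos c1) - of_nat (code_num_neg c1)) * of_nat (code_den c2)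
        \<le> (of_nat (code_num_pos c2) - of_nat (code_num_neg c2)) * (of_nat (code_den c1) :: rat)"
    unfolding rat_decode_def by (simp add: divide_le_eq le_divide_eq mult.commute mult.left_commute)
  also have "\<dots> \<longleftrightarrow>
      of_nat (code_num_pos c1 * code_den c2 + code_num_neg c2 * code_den c1)
        \<le> (of_nat (code_num_pos c2 * code_den c1 + code_num_neg c1 * code_den c2) :: rat)"
    by (simp add: algebra_simps)
  finally show ?thesis by (simp only: of_nat_le_iff)
qed

lemma recursive_rat_max [recursive_rat_intros]:
  assumes "recursive_rat k F" "recursive_rat k G"
  shows "recursive_rat k (\<lambda>xs. max (F xs) (G xs))"
proof -
  define c1 c2 where "c1 xs = rcode (F xs)" and "c2 xs = rcode (G xs)" for xs
  have "recursive k (\<lambda>xs.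
      if code_num_pos (c1 xs) * code_den (c2 xs) + code_num_neg (c2 xs) * code_den (c1 xs)
         \<le> code_num_pos (c2 xs) * code_den (c1 xs) + code_num_neg (c1 xs) * code_den (c2 xs)
      then c2 xs else c1 xs)"
    using assms unfolding recursive_rat_def c1_def c2_def by (intro recursive_intros)
  then show ?thesis
    unfolding recursive_rat_def
    by (rule recursive_cong) (simp add: rat_decode_le_iff[symmetric] c1_def c2_def max_def)
qed

lemma recursive_rat_abs [recursive_rat_intros]:
  assumes "recursive_rat k F"
  shows "recursive_rat k (\<lambda>xs. \<bar>F xs\<bar>)"
proof -
  have "recursive_rat k (\<lambda>xs. max (F xs) (- F xs))"
    using assms by (intro recursive_rat_intros)
  then show ?thesis by (rule recursive_rat_cong) (simp add: abs_if max_def)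
qed

lemma recursive_rat_sum [recursive_rat_intros]:
  assumes "\<And>i. recursive_rat k (F i)"
  shows "recursive_rat k (\<lambda>xs. \<Sum>i\<in>A. F i xs)"
proof (cases "finite A")
  case True
  then show ?thesis
    by (induction A rule: finite_induct) (simp_all add: recursive_rat_const recursive_rat_add assms)
qed (simp add: recursive_rat_const)

lemma recursive_rat_two_div_pow [recursive_rat_intros]:
  assumes "recursive k G"
  shows "recursive_rat k (\<lambda>xs. 2 / 2 ^ (G xs))"
proof -
  have "recursive_rat k (\<lambda>xs. (of_nat 2 - of_nat 0) / of_nat (max 1 (2 ^ (G xs))))"
    by (intro recursive_rat_frac recursive_intros assms)
  then show ?thesis by (rule recursive_rat_cong) simp
qed

section \<open>Binary strings and lower-computable semi-measures\<close>

lemma bcode_inj: "bcode s = bcode t \<Longrightarrow> s = t"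
proof (induction s arbitrary: t)
  case Nil then show ?case by (cases t) (auto split: if_splits)
next
  case (Cons b s)
  then show ?case
  proof (cases t)
    case Nil then show ?thesis using Cons by (simp split: if_splits)
  next
    case (Cons c t')
    have "even (bcode (b # s)) = even (bcode (c # t'))" using Cons.prems Cons by simp
    then have "b = c" by (simp split: if_splits)
    then have "bcode s = bcode t'" using Cons.prems Cons by simp
    then show ?thesis using Cons.IH Cons \<open>b = c\<close> by simp
  qed
qed

lemma bcode_surj: "\<exists>s. bcode s = n"
proof (induction n rule: less_induct)
  case (less n)
  show ?case
  proof (cases "n = 0")
    case True then show ?thesis by (intro exI[of _ "[]"]) simp
  next
    case False
    show ?thesis
    proof (cases "even n")
      case True
      define k where "k = (n - 2) div 2"
      have k: "n = 2 * k + 2" using True False unfolding k_def by (auto elim!: evenE)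
      then have "k < n" by simp
      then obtain s where "bcode s = k" using less by blast
      then show ?thesis using k by (intro exI[of _ "True # s"]) simp
    next
      case odd: False
      define k where "k = n div 2"
      have k: "n = 2 * k + 1" using odd unfolding k_def by simp
      then have "k < n" by simp
      then obtain s where "bcode s = k" using less by blast
      then show ?thesis using k by (intro exI[of _ "False # s"]) simp
    qed
  qed
qed

definition bdecode :: "nat \<Rightarrow> bool list" where "bdecode n = (SOME s. bcode s = n)"

lemma bcode_bdecode [simp]: "bcode (bdecode n) = n"
  unfolding bdecode_def by (rule someI_ex[OF bcode_surj])

lemma bdecode_bcode [simp]: "bdecode (bcode s) = s"
  by (rule bcode_inj) simp

lemma recursive_rat_rec_fun [recursive_rat_intros]:
  assumes "rec_fun g" "recursive k N" "recursive k B"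
  shows "recursive_rat k (\<lambda>xs. g (N xs) (bdecode (B xs)))"
proof -
  obtain r where r: "\<forall>n s. eval r [prod_encode (n, bcode s)] (rcode (g n s))"
    using assms(1) unfolding rec_fun_def by auto
  have "recursive 1 (\<lambda>xs. rcode (g (fst (prod_decode (xs ! 0))) (bdecode (snd (prod_decode (xs ! 0))))))"
    unfolding recursive_def
  proof (intro exI[of _ r] allI impI)
    fix xs :: "nat list" assume "length xs = 1"
    then obtain w where w: "xs = [w]" by (metis One_nat_def length_0_conv length_Suc_conv)
    have "w = prod_encode (fst (prod_decode w), bcode (bdecode (snd (prod_decode w))))" by simp
    then show "eval r xs (rcode (g (fst (prod_decode (xs ! 0))) (bdecode (snd (prod_decode (xs ! 0))))))"
      using r w by (metis nth_Cons_0)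
  qed
  from recursive_comp1[OF this, of k "\<lambda>xs. prod_encode (N xs, B xs)"]
  show ?thesis unfolding recursive_rat_def using assms(2,3) by (simp add: recursive_prod_encode)
qed

lemma recursive_rat_rec_nat_rat [recursive_rat_intros]:
  assumes "rec_nat_rat q" "recursive k N"
  shows "recursive_rat k (\<lambda>xs. q (N xs))"
proof -
  obtain r where r: "\<forall>n. eval r [n] (rcode (q n))"
    using assms(1) unfolding rec_nat_rat_def by auto
  have "recursive 1 (\<lambda>xs. rcode (q (xs ! 0)))"
    unfolding recursive_def
  proof (intro exI[of _ r] allI impI)
    fix xs :: "nat list" assume "length xs = 1"
    then obtain w where w: "xs = [w]" by (metis One_nat_def length_0_conv length_Suc_conv)
    then show "eval r xs (rcode (q (xs ! 0)))" using r by simp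
  qed
  from recursive_comp1[OF this assms(2)] show ?thesis unfolding recursive_rat_def by simp
qed

lemma rec_funI:
  assumes "recursive_rat 1 (\<lambda>xs. f (fst (prod_decode (xs ! 0))) (bdecode (snd (prod_decode (xs ! 0)))))"
  shows "rec_fun f"
proof -
  obtain r where r: "\<forall>xs. length xs = 1 \<longrightarrow>
      eval r xs (rcode (f (fst (prod_decode (xs ! 0))) (bdecode (snd (prod_decode (xs ! 0))))))"
    using assms unfolding recursive_rat_def recursive_def by blast
  show ?thesis unfolding rec_fun_def
  proof (intro exI[of _ r] allI)
    fix n s
    show "eval r [prod_encode (n, bcode s)] (rcode (f n s))"
      using r[rule_format, of "[prod_encode (n, bcode s)]"] by simp
  qed
qed

lemma rec_fun_const: "rec_fun (\<lambda>n s. c)"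
  by (rule rec_funI) (rule recursive_rat_const)

primrec running_max :: "(nat \<Rightarrow> 'a \<Rightarrow> 'b::linorder) \<Rightarrow> nat \<Rightarrow> 'a \<Rightarrow> 'b" where
  "running_max L 0 s = L 0 s"
| "running_max L (Suc n) s = max (running_max L n s) (L (Suc n) s)"

lemma running_max_Suc_ge: "running_max L n s \<le> running_max L (Suc n) s"
  by simp

lemma le_running_max: "L n s \<le> running_max L n s"
  by (cases n) auto

lemma running_max_attained: "\<exists>k\<le>n. running_max L n s = L k s"
proof (induction n)
  case (Suc n)
  then obtain k where k: "k \<le> n" "running_max L n s = L k s" by blast
  show ?case
  proof (cases "running_max L n s \<le> L (Suc n) s")
    case True
    then show ?thesis by (intro exI[of _ "Suc n"]) (simp add: max_def)
  next
    case False
    then show ?thesis using k by (intro exI[of _ k]) (simp add: max_def)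
  qed
qed simp

lemma rec_fun_running_max:
  assumes "rec_fun L"
  shows "rec_fun (running_max L)"
proof -
  define F0 where "F0 = (\<lambda>ys. rcode (L 0 (bdecode (ys ! 0))))"
  define G where "G = (\<lambda>zs. rcode (max (rat_decode (zs ! 0)) (L (Suc (zs ! 1)) (bdecode (zs ! 2)))))"
  have "recursive 1 F0"
    using recursive_rat_rec_fun[OF assms, of 1 "\<lambda>_. 0" "\<lambda>ys. ys ! 0"]
    unfolding F0_def recursive_rat_def by (simp add: recursive_intros)
  moreover have "recursive (Suc (Suc 1)) G"
    using assms unfolding G_def recursive_rat_def[symmetric]
    by (intro recursive_rat_intros recursive_intros) auto
  ultimately have "recursive (Suc 1) (\<lambda>xs. natrec F0 G (hd xs) (tl xs))"
    by (rule recursive_prim)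
  then have "recursive 1 (\<lambda>xs. (\<lambda>xs. natrec F0 G (hd xs) (tl xs))
      [fst (prod_decode (xs ! 0)), snd (prod_decode (xs ! 0))])"
    unfolding Suc_1 by (intro recursive_comp2) (auto intro: recursive_intros)
  moreover have "natrec F0 G n [b] = rcode (running_max L n (bdecode b))" for n b
    by (induction n) (simp_all add: F0_def G_def)
  ultimately have "recursive_rat 1
      (\<lambda>xs. running_max L (fst (prod_decode (xs ! 0))) (bdecode (snd (prod_decode (xs ! 0)))))"
    unfolding recursive_rat_def by simp
  then show ?thesis by (rule rec_funI)
qed

lemma lower_computable_smI:
  assumes "semi_measure m" and "rec_fun L"
    and "\<And>n s. real_of_rat (L n s) \<le> m s" and "\<And>s. (\<lambda>n. real_of_rat (L n s)) \<longlonglongrightarrow> m s"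
  shows "lower_computable_sm m"
proof -
  have upper: "real_of_rat (running_max L n s) \<le> m s" for n s
  proof -
    obtain k where "running_max L n s = L k s" using running_max_attained[of n L s] by blast
    then show ?thesis using assms(3) by simp
  qed
  have lower: "real_of_rat (L n s) \<le> real_of_rat (running_max L n s)" for n s
    by (simp add: of_rat_less_eq le_running_max)
  have "(\<lambda>n. real_of_rat (running_max L n s)) \<longlonglongrightarrow> m s" for s
    by (rule tendsto_sandwich[OF _ _ assms(4) tendsto_const]) (simp_all add: lower upper)
  moreover have "rec_fun (running_max L)" using assms(2) by (rule rec_fun_running_max)
  ultimately show ?thesis
    unfolding lower_computable_sm_def using assms(1) running_max_Suc_ge
    by (intro conjI exI[of _ "running_max L"]) auto
qed
section \<open>Quadratic forms and rational approximation\<close>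

lemma qform_diff: "qform (A - B) v = qform A v - qform B v"
  unfolding qform_def by (simp add: algebra_simps sum_subtractf)

lemma qform_add: "qform (A + B) v = qform A v + qform B v"
  unfolding qform_def by (simp add: algebra_simps sum.distrib)

lemma qform_zero: "qform 0 v = 0"
  unfolding qform_def by simp

lemma qform_sum: "qform (sum R F) v = (\<Sum>s\<in>F. qform (R s) v)"
proof (cases "finite F")
  case True
  then show ?thesis
    by (induction F rule: finite_induct) (simp_all add: qform_zero qform_add)
qed (simp add: qform_zero)

lemma qform_scaleR: "qform (c *\<^sub>R A) v = of_real c * qform A v"
proof -
  have "(c *\<^sub>R A) $ i $ j = of_real c * A $ i $ j" for i j
    by (simp only: vector_scaleR_component) (simp add: scaleR_conv_of_real)
  then show ?thesis unfolding qform_def by (simp add: sum_distrib_left algebra_simps)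
qed

lemma Re_qform_mat1: "Re (qform (mat 1) v) = (norm v)\<^sup>2"
proof -
  have "qform (mat 1) v = (\<Sum>i\<in>UNIV. cnj (v $ i) * v $ i)"
    unfolding qform_def mat_def by (simp add: if_distrib if_distribR sum.delta cong: if_cong)
  moreover have "Re (cnj z * z) = (cmod z)\<^sup>2" for z
    by (metis Re_complex_of_real complex_norm_square mult.commute)
  ultimately show ?thesis
    unfolding norm_vec_def L2_set_def by (simp add: Re_sum sum_nonneg)
qed

lemma Re_qform_scaleR_mat1: "Re (qform (a *\<^sub>R mat 1) v) = a * (norm v)\<^sup>2"
  by (simp add: qform_scaleR Re_qform_mat1)

lemma loewner_le_Re_qform: "loewner_le A B \<Longrightarrow> Re (qform A v) \<le> Re (qform B v)"
  unfolding loewner_le_def psd_def qform_diff by auto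

lemma hermitian_scaleR_mat1: "hermitian (a *\<^sub>R mat 1)"
  unfolding hermitian_def mat_def by simp

lemma psd_scaleR_mat1: "0 \<le> a \<Longrightarrow> psd (a *\<^sub>R mat 1)"
  unfolding psd_def by (simp add: hermitian_scaleR_mat1 Re_qform_scaleR_mat1)

lemma semi_measure_qform:
  assumes "semi_POVM M" and "norm x \<le> 1"
  shows "semi_measure (\<lambda>s. Re (qform (M s) x))"
  unfolding semi_measure_def
proof (intro conjI allI impI)
  fix s
  have "loewner_le 0 (M s)" using assms(1) unfolding semi_POVM_def by blast
  then show "0 \<le> Re (qform (M s) x)" using loewner_le_Re_qform by (fastforce simp: qform_zero)
next
  fix F :: "bool list set" assume "finite F"
  then have "loewner_le (sum M F) (mat 1)" using assms(1) unfolding semi_POVM_def by blast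
  then have "(\<Sum>s\<in>F. Re (qform (M s) x)) \<le> (norm x)\<^sup>2"
    using loewner_le_Re_qform by (fastforce simp: qform_sum Re_sum Re_qform_mat1)
  also have "\<dots> \<le> 1" using assms(2) by (simp add: power_le_one)
  finally show "(\<Sum>s\<in>F. Re (qform (M s) x)) \<le> 1" .
qed

definition entry_abs_sum :: "complex ^ 'n ^ 'n \<Rightarrow> real" where
  "entry_abs_sum G = (\<Sum>i\<in>UNIV. \<Sum>j\<in>UNIV. \<bar>Re (G $ i $ j)\<bar> + \<bar>Im (G $ i $ j)\<bar>)"

lemma cmod_sesquilinear_perturbation:
  fixes a b a' b' g :: complex
  assumes "cmod a \<le> 1" "cmod b \<le> 1" "cmod (a - a') \<le> d" "cmod (b - b') \<le> d"
  shows "cmod (cnj a * g * b - cnj a' * g * b') \<le> cmod g * (2 * d + d * d)"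
proof -
  have d0: "0 \<le> d" using assms(3) norm_ge_zero order_trans by blast
  have "cmod b' \<le> cmod b + cmod (b - b')" by (metis norm_triangle_sub add.commute norm_minus_commute)
  then have b': "cmod b' \<le> 1 + d" using assms(2,4) by linarith
  have eq: "cnj a * g * b - cnj a' * g * b' = g * (cnj a * (b - b') + cnj (a - a') * b')"
    by (simp add: algebra_simps)
  have "cmod (cnj a * (b - b') + cnj (a - a') * b') \<le> cmod a * cmod (b - b') + cmod (a - a') * cmod b'"
    using norm_triangle_ineq[of "cnj a * (b - b')" "cnj (a - a') * b'"]
    by (simp only: norm_mult complex_mod_cnj)
  then have "cmod (cnj a * g * b - cnj a' * g * b')
      \<le> cmod g * (cmod a * cmod (b - b') + cmod (a - a') * cmod b')"
    unfolding eq norm_mult by (rule mult_left_mono) simp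
  also have "\<dots> \<le> cmod g * (1 * d + d * (1 + d))"
    using assms b' d0 by (intro mult_left_mono add_mono mult_mono) auto
  finally show ?thesis by (simp add: algebra_simps)
qed

lemma Re_qform_perturbation:
  fixes G :: "complex ^ 'n ^ 'n" and x y :: "complex ^ 'n"
  assumes "\<And>i. cmod (x $ i) \<le> 1" and "\<And>i. cmod (x $ i - y $ i) \<le> d"
  shows "\<bar>Re (qform G x) - Re (qform G y)\<bar> \<le> entry_abs_sum G * (2 * d + d * d)"
proof -
  have d0: "0 \<le> d" using assms(2) norm_ge_zero order_trans by blast
  have "\<bar>Re (qform G x) - Re (qform G y)\<bar> \<le> cmod (qform G x - qform G y)"
    by (metis abs_Re_le_cmod minus_complex.sel(1))
  also have "\<dots> \<le> (\<Sum>i\<in>UNIV. \<Sum>j\<in>UNIV.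
      cmod (cnj (x $ i) * G $ i $ j * x $ j - cnj (y $ i) * G $ i $ j * y $ j))"
    unfolding qform_def sum_subtractf[symmetric]
    by (rule order_trans[OF norm_sum]) (intro sum_mono norm_sum)
  also have "\<dots> \<le> (\<Sum>i\<in>UNIV. \<Sum>j\<in>UNIV.
      (\<bar>Re (G $ i $ j)\<bar> + \<bar>Im (G $ i $ j)\<bar>) * (2 * d + d * d))"
    using assms d0
    by (intro sum_mono order_trans[OF cmod_sesquilinear_perturbation mult_right_mono[OF cmod_le]]) auto
  finally show ?thesis
    unfolding entry_abs_sum_def by (simp add: sum_distrib_right)
qed

lemma Re_qform_lower_bound:
  assumes "loewner_le G M" and "\<And>i. cmod (x $ i) \<le> 1" and "\<And>i. cmod (x $ i - y $ i) \<le> d"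
  shows "Re (qform G y) - entry_abs_sum G * (2 * d + d * d) \<le> Re (qform M x)"
  using Re_qform_perturbation[OF assms(2,3), of G] loewner_le_Re_qform[OF assms(1), of x]
  by linarith

lemma tendsto_qform [tendsto_intros]:
  assumes "(G \<longlongrightarrow> M) F" and "(y \<longlongrightarrow> x) F"
  shows "((\<lambda>n. qform (G n) (y n)) \<longlongrightarrow> qform M x) F"
  unfolding qform_def by (intro tendsto_intros assms)

lemma tendsto_entry_abs_sum [tendsto_intros]:
  assumes "(G \<longlongrightarrow> M) F"
  shows "((\<lambda>n. entry_abs_sum (G n)) \<longlongrightarrow> entry_abs_sum M) F"
  unfolding entry_abs_sum_def by (intro tendsto_intros assms)

lemma tendsto_Re_qform_lower_bound:
  assumes "(G \<longlongrightarrow> M) F" and "(y \<longlongrightarrow> x) F" and "(d \<longlongrightarrow> 0) F"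
  shows "((\<lambda>n. Re (qform (G n) (y n)) - entry_abs_sum (G n) * (2 * d n + d n * d n))
           \<longlongrightarrow> Re (qform M x)) F"
proof -
  have "((\<lambda>n. Re (qform (G n) (y n)) - entry_abs_sum (G n) * (2 * d n + d n * d n))
           \<longlongrightarrow> Re (qform M x) - entry_abs_sum M * (2 * 0 + 0 * 0)) F"
    by (intro tendsto_intros assms)
  then show ?thesis by simp
qed

definition rat_matrix :: "('n \<Rightarrow> 'n \<Rightarrow> rat) \<Rightarrow> ('n \<Rightarrow> 'n \<Rightarrow> rat) \<Rightarrow> complex ^ 'n ^ 'n" where
  "rat_matrix a b = (\<chi> i j. Complex (of_rat (a i j)) (of_rat (b i j)))"

definition rat_vector :: "('n \<Rightarrow> rat) \<Rightarrow> ('n \<Rightarrow> rat) \<Rightarrow> complex ^ 'n" where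
  "rat_vector p q = (\<chi> i. Complex (of_rat (p i)) (of_rat (q i)))"

definition qform_lower_rat ::
    "('n::finite \<Rightarrow> 'n \<Rightarrow> rat) \<Rightarrow> ('n \<Rightarrow> 'n \<Rightarrow> rat) \<Rightarrow> ('n \<Rightarrow> rat) \<Rightarrow> ('n \<Rightarrow> rat) \<Rightarrow> rat \<Rightarrow> rat" where
  "qform_lower_rat a b p q d =
     (\<Sum>i\<in>UNIV. \<Sum>j\<in>UNIV. a i j * (p i * p j + q i * q j) - b i j * (p i * q j - q i * p j))
     - (\<Sum>i\<in>UNIV. \<Sum>j\<in>UNIV. \<bar>a i j\<bar> + \<bar>b i j\<bar>) * (2 * d + d * d)"

lemma of_rat_qform_lower_rat:
  "real_of_rat (qform_lower_rat a b p q d) =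
     Re (qform (rat_matrix a b) (rat_vector p q))
     - entry_abs_sum (rat_matrix a b) * (2 * of_rat d + of_rat d * of_rat d)"
proof -
  have "Re (cnj (rat_vector p q $ i) * rat_matrix a b $ i $ j * rat_vector p q $ j) =
      of_rat (a i j * (p i * p j + q i * q j) - b i j * (p i * q j - q i * p j))" for i j
    unfolding rat_matrix_def rat_vector_def
    by (simp add: of_rat_diff of_rat_add of_rat_mult algebra_simps)
  moreover have "\<bar>Re (rat_matrix a b $ i $ j)\<bar> + \<bar>Im (rat_matrix a b $ i $ j)\<bar> =
      of_rat (\<bar>a i j\<bar> + \<bar>b i j\<bar>)" for i j
    unfolding rat_matrix_def by (simp add: of_rat_add)
  ultimately show ?thesis
    unfolding qform_lower_rat_def qform_def entry_abs_sum_def Re_sum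
    by (simp add: of_rat_diff of_rat_add of_rat_mult of_rat_sum)
qed

lemma computable_vec_rat_approx:
  fixes x :: "complex ^ 'n"
  assumes "computable_vec x"
  obtains p q :: "'n \<Rightarrow> nat \<Rightarrow> rat"
  where "\<And>i. rec_nat_rat (p i)" and "\<And>i. rec_nat_rat (q i)"
    and "\<And>i n. cmod (x $ i - rat_vector (\<lambda>i. p i n) (\<lambda>i. q i n) $ i) \<le> 2 / 2 ^ n"
proof -
  have re: "\<forall>i. \<exists>q. rec_nat_rat q \<and> (\<forall>n. \<bar>Re (x $ i) - of_rat (q n)\<bar> \<le> (1/2) ^ n)"
    and im: "\<forall>i. \<exists>q. rec_nat_rat q \<and> (\<forall>n. \<bar>Im (x $ i) - of_rat (q n)\<bar> \<le> (1/2) ^ n)"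
    using assms unfolding computable_vec_def computable_real_def by blast+
  from choice[OF re] choice[OF im] obtain p q where
    p: "\<forall>i. rec_nat_rat (p i) \<and> (\<forall>n. \<bar>Re (x $ i) - of_rat (p i n)\<bar> \<le> (1/2) ^ n)" and
    q: "\<forall>i. rec_nat_rat (q i) \<and> (\<forall>n. \<bar>Im (x $ i) - of_rat (q i n)\<bar> \<le> (1/2) ^ n)"
    by blast
  have "cmod (x $ i - rat_vector (\<lambda>i. p i n) (\<lambda>i. q i n) $ i) \<le> 2 / 2 ^ n" for i n
  proof -
    have "cmod (x $ i - rat_vector (\<lambda>i. p i n) (\<lambda>i. q i n) $ i)
        \<le> \<bar>Re (x $ i) - of_rat (p i n)\<bar> + \<bar>Im (x $ i) - of_rat (q i n)\<bar>"
      using cmod_le[of "x $ i - rat_vector (\<lambda>i. p i n) (\<lambda>i. q i n) $ i"]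
      unfolding rat_vector_def by simp
    also have "\<dots> \<le> (1/2) ^ n + (1/2) ^ n" using p q by (intro add_mono) auto
    finally show ?thesis by (simp add: power_one_over)
  qed
  with p q that show thesis by blast
qed

lemma rec_herQ_fun_rat_matrix:
  assumes "rec_herQ_fun f"
  obtains a b :: "'n::finite \<Rightarrow> 'n \<Rightarrow> nat \<Rightarrow> bool list \<Rightarrow> rat"
  where "\<And>i j. rec_fun (a i j)" and "\<And>i j. rec_fun (b i j)"
    and "\<And>n s. f n s = rat_matrix (\<lambda>i j. a i j n s) (\<lambda>i j. b i j n s)"
proof -
  have "\<forall>ij. \<exists>ab. rec_fun (fst ab) \<and> rec_fun (snd ab) \<and>
      (\<forall>n s. f n s $ fst ij $ snd ij = Complex (of_rat (fst ab n s)) (of_rat (snd ab n s)))"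
    using assms unfolding rec_herQ_fun_def by fastforce
  from choice[OF this] obtain ab where ab: "\<forall>ij. rec_fun (fst (ab ij)) \<and> rec_fun (snd (ab ij)) \<and>
      (\<forall>n s. f n s $ fst ij $ snd ij =
        Complex (of_rat (fst (ab ij) n s)) (of_rat (snd (ab ij) n s)))"
    by blast
  show thesis
  proof (rule that[of "\<lambda>i j. fst (ab (i, j))" "\<lambda>i j. snd (ab (i, j))"])
    show "rec_fun (fst (ab (i, j)))" "rec_fun (snd (ab (i, j)))" for i j
      using ab by auto
    show "f n s = rat_matrix (\<lambda>i j. fst (ab (i, j)) n s) (\<lambda>i j. snd (ab (i, j)) n s)" for n s
      using ab by (auto simp: rat_matrix_def vec_eq_iff)
  qed
qed

lemma rec_fun_qform_lower_rat:
  assumes "\<And>i j. rec_fun (a i j)" and "\<And>i j. rec_fun (b i j)"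
    and "\<And>i. rec_nat_rat (p i)" and "\<And>i. rec_nat_rat (q i)"
  shows "rec_fun (\<lambda>n s. qform_lower_rat (\<lambda>i j. a i j n s) (\<lambda>i j. b i j n s)
           (\<lambda>i. p i n) (\<lambda>i. q i n) (2 / 2 ^ n))"
proof (rule rec_funI)
  have "recursive_rat k (\<lambda>xs. qform_lower_rat (\<lambda>i j. a i j (N xs) (bdecode (B xs)))
      (\<lambda>i j. b i j (N xs) (bdecode (B xs))) (\<lambda>i. p i (N xs)) (\<lambda>i. q i (N xs)) (2 / 2 ^ N xs))"
    if "recursive k N" and "recursive k B" for k N B
    unfolding qform_lower_rat_def by (intro recursive_rat_intros assms that)
  moreover have "recursive 1 (\<lambda>xs. fst (prod_decode (xs ! 0)))"
    and "recursive 1 (\<lambda>xs. snd (prod_decode (xs ! 0)))"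
    by (simp_all add: recursive_fst_decode recursive_snd_decode recursive_proj)
  ultimately show "recursive_rat 1 (\<lambda>xs. qform_lower_rat
      (\<lambda>i j. a i j (fst (prod_decode (xs ! 0))) (bdecode (snd (prod_decode (xs ! 0)))))
      (\<lambda>i j. b i j (fst (prod_decode (xs ! 0))) (bdecode (snd (prod_decode (xs ! 0)))))
      (\<lambda>i. p i (fst (prod_decode (xs ! 0)))) (\<lambda>i. q i (fst (prod_decode (xs ! 0))))
      (2 / 2 ^ fst (prod_decode (xs ! 0))))"
    by blast
qed

lemma lower_computable_sm_qform:
  fixes M :: "bool list \<Rightarrow> complex ^ 'n ^ 'n"
  assumes "lower_computable_sPOVM M" and "computable_vec x" and "norm x \<le> 1"
  shows "lower_computable_sm (\<lambda>s. Re (qform (M s) x))"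
proof -
  obtain f where "semi_POVM M" and f: "rec_herQ_fun f"
      and f_lim: "\<And>s. (\<lambda>n. f n s) \<longlonglongrightarrow> M s" and f_le: "\<And>n s. loewner_le (f n s) (M s)"
    using assms(1) unfolding lower_computable_sPOVM_def by blast
  obtain a b where ab: "\<And>i j. rec_fun (a i j)" "\<And>i j. rec_fun (b i j)"
      and f_eq: "\<And>n s. f n s = rat_matrix (\<lambda>i j. a i j n s) (\<lambda>i j. b i j n s)"
    using rec_herQ_fun_rat_matrix[OF f] by blast
  obtain p q where pq: "\<And>i. rec_nat_rat (p i)" "\<And>i. rec_nat_rat (q i)"
      and y_close: "\<And>i n. cmod (x $ i - rat_vector (\<lambda>i. p i n) (\<lambda>i. q i n) $ i) \<le> 2 / 2 ^ n"
    using computable_vec_rat_approx[OF assms(2)] by blast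
  define y where "y n = rat_vector (\<lambda>i. p i n) (\<lambda>i. q i n)" for n
  define d :: "nat \<Rightarrow> real" where "d n = 2 / 2 ^ n" for n
  define L where "L n s = qform_lower_rat (\<lambda>i j. a i j n s) (\<lambda>i j. b i j n s)
      (\<lambda>i. p i n) (\<lambda>i. q i n) (2 / 2 ^ n)" for n s
  have L_eq: "real_of_rat (L n s) =
      Re (qform (f n s) (y n)) - entry_abs_sum (f n s) * (2 * d n + d n * d n)" for n s
    unfolding L_def f_eq y_def d_def of_rat_qform_lower_rat by (simp add: of_rat_divide of_rat_power)
  have x_le: "cmod (x $ i) \<le> 1" for i
    using Finite_Cartesian_Product.norm_nth_le[of x i] assms(3) by linarith
  have d_lim: "d \<longlonglongrightarrow> 0"
    unfolding d_def
    by (intro tendsto_divide_0[OF tendsto_const] filterlim_realpow_sequentially_gt1) simp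
  have "y \<longlonglongrightarrow> x"
  proof (rule vec_tendstoI)
    fix i
    have "(\<lambda>n. y n $ i - x $ i) \<longlonglongrightarrow> 0"
      using y_close unfolding y_def
      by (intro Lim_null_comparison[OF _ d_lim] always_eventually) (simp add: d_def norm_minus_commute)
    then show "(\<lambda>n. y n $ i) \<longlonglongrightarrow> x $ i" by (rule LIM_zero_cancel)
  qed
  show ?thesis
  proof (rule lower_computable_smI)
    show "semi_measure (\<lambda>s. Re (qform (M s) x))"
      using \<open>semi_POVM M\<close> assms(3) by (rule semi_measure_qform)
    show "rec_fun L"
      unfolding L_def by (rule rec_fun_qform_lower_rat[OF ab pq])
    show "real_of_rat (L n s) \<le> Re (qform (M s) x)" for n s
      unfolding L_eq using f_le x_le y_close unfolding y_def d_def by (rule Re_qform_lower_bound)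
    show "(\<lambda>n. real_of_rat (L n s)) \<longlonglongrightarrow> Re (qform (M s) x)" for s
      unfolding L_eq using f_lim \<open>y \<longlonglongrightarrow> x\<close> d_lim by (rule tendsto_Re_qform_lower_bound)
  qed
qed

lemma scaleR_mat1_diff: "a *\<^sub>R mat 1 - b *\<^sub>R mat 1 = (a - b) *\<^sub>R mat 1"
  by (simp add: scaleR_diff_left)

lemma semi_POVM_scaleR_mat1:
  assumes "semi_measure r"
  shows "semi_POVM (\<lambda>s. r s *\<^sub>R (mat 1 :: complex ^ 'n ^ 'n))"
  unfolding semi_POVM_def
proof (intro conjI allI impI)
  fix s
  show "hermitian (r s *\<^sub>R (mat 1 :: complex ^ 'n ^ 'n))" by (rule hermitian_scaleR_mat1)
  show "loewner_le 0 (r s *\<^sub>R (mat 1 :: complex ^ 'n ^ 'n))"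
    using assms unfolding loewner_le_def semi_measure_def by (simp add: psd_scaleR_mat1)
next
  fix F :: "bool list set" assume "finite F"
  then have "sum r F \<le> 1" using assms unfolding semi_measure_def by blast
  then have "psd ((1 - sum r F) *\<^sub>R (mat 1 :: complex ^ 'n ^ 'n))" by (simp add: psd_scaleR_mat1)
  then show "loewner_le (\<Sum>s\<in>F. r s *\<^sub>R (mat 1 :: complex ^ 'n ^ 'n)) (mat 1)"
    unfolding loewner_le_def scaleR_sum_left[symmetric] by (simp add: scaleR_diff_left)
qed

lemma rec_herQ_fun_scaleR_mat1:
  assumes "rec_fun g"
  shows "rec_herQ_fun (\<lambda>n s. real_of_rat (g n s) *\<^sub>R (mat 1 :: complex ^ 'n ^ 'n))"
  unfolding rec_herQ_fun_def
proof (intro conjI allI)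
  fix i j :: 'n
  show "\<exists>gre gim. rec_fun gre \<and> rec_fun gim \<and>
      (\<forall>n s. (real_of_rat (g n s) *\<^sub>R (mat 1 :: complex ^ 'n ^ 'n)) $ i $ j =
        Complex (of_rat (gre n s)) (of_rat (gim n s)))"
    using assms rec_fun_const[of 0]
    by (intro exI[of _ "if i = j then g else (\<lambda>n s. 0)"] exI[of _ "\<lambda>n s. 0"])
      (auto simp: mat_def complex_eq_iff)
qed (rule hermitian_scaleR_mat1)

lemma lower_computable_sPOVM_scaleR_mat1:
  assumes "lower_computable_sm r"
  shows "lower_computable_sPOVM (\<lambda>s. r s *\<^sub>R (mat 1 :: complex ^ 'n ^ 'n))"
proof -
  obtain g where g: "rec_fun g" and g_lim: "\<And>s. (\<lambda>n. real_of_rat (g n s)) \<longlonglongrightarrow> r s"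
      and g_mono: "\<And>n s. g n s \<le> g (Suc n) s"
    using assms unfolding lower_computable_sm_def by blast
  have "real_of_rat (g n s) \<le> r s" for n s
    by (rule incseq_le[OF _ g_lim]) (simp add: incseq_SucI of_rat_less_eq g_mono)
  then have "loewner_le (real_of_rat (g n s) *\<^sub>R mat 1) (r s *\<^sub>R (mat 1 :: complex ^ 'n ^ 'n))"
    for n s
    unfolding loewner_le_def scaleR_mat1_diff by (simp add: psd_scaleR_mat1)
  moreover have "(\<lambda>n. real_of_rat (g n s) *\<^sub>R mat 1) \<longlonglongrightarrow> r s *\<^sub>R (mat 1 :: complex ^ 'n ^ 'n)"
    for s
    by (intro tendsto_scaleR g_lim tendsto_const)
  moreover have "semi_POVM (\<lambda>s. r s *\<^sub>R (mat 1 :: complex ^ 'n ^ 'n))"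
    using assms unfolding lower_computable_sm_def by (blast intro: semi_POVM_scaleR_mat1)
  ultimately show ?thesis
    unfolding lower_computable_sPOVM_def using rec_herQ_fun_scaleR_mat1[OF g]
    by (intro conjI exI[of _ "\<lambda>n s. real_of_rat (g n s) *\<^sub>R (mat 1 :: complex ^ 'n ^ 'n)"]) auto
qed

theorem mainTheorem11:
  fixes M :: "bool list \<Rightarrow> complex ^ 'n ^ 'n" and x :: "complex ^ 'n"
  assumes "universal_sPOVM M" and "computable_vec x" and "norm x = 1"
  shows "universal_probability (\<lambda>s. Re (qform (M s) x))"
  unfolding universal_probability_def
proof (intro conjI allI impI)
  have M: "lower_computable_sPOVM M"
    and M_univ: "\<And>R. lower_computable_sPOVM R \<Longrightarrow> \<exists>c>0. \<forall>s. loewner_le (c *\<^sub>R R s) (M s)"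
    using assms(1) unfolding universal_sPOVM_def by auto
  show "lower_computable_sm (\<lambda>s. Re (qform (M s) x))"
    using M assms(2,3) by (intro lower_computable_sm_qform) simp_all
  fix r assume "lower_computable_sm r"
  from M_univ[OF lower_computable_sPOVM_scaleR_mat1[OF this]]
  obtain c where "c > 0" and c: "\<And>s. loewner_le (c *\<^sub>R (r s *\<^sub>R mat 1)) (M s)"
    by blast
  have "c * r s \<le> Re (qform (M s) x)" for s
    using loewner_le_Re_qform[OF c, of s x] assms(3) by (simp add: Re_qform_scaleR_mat1)
  with \<open>c > 0\<close> show "\<exists>c>0. \<forall>s. c * r s \<le> Re (qform (M s) x)" by blast
qed

end
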